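(* Fix a sequence of matchings, two rounds $t_1 < t_2$, and the load vector $x^{(t_1)}$ at the end of round $t_1$. For any family of non-negative numbers $g^{(s)}_{u,v}$ ($[u:v]\in \mathbf{M}^{(s)}$, $t_1 +1 \leq s \leq t_2$), let $Z := \sum_{s=t_1+1}^{t_2} \sum_{[u:v] \in \mathbf{M}^{(s)}} g_{u,v}^{(s)} e_{u,v}^{(s)}$. Then $\mathbb{E}[Z]=0$ and for any $\delta > 0$, \[ \Pr\left[ \left| Z - \mathbb{E}[Z] \right| \geq \delta \right] \leq 2 \exp \left(- \frac{ \delta^2}{2 \sum_{s=t_1+1}^{t_2} \sum_{[u:v] \in \mathbf{M}^{(s)}} \left(g^{(s)}_{u,v}\right)^2 } \right). \]
   Context: Discrete protocol with random orientation on a graph $G=(V,E)$ with $n$ nodes and matchings $\mathbf{M}^{(s)}\subseteq E$: $x^{(s)}\in\mathbb{Z}^n$ is the load vector at the end of round $s$. For each $\{u,v\}\in\mathbf{M}^{(s)}$ an independent uniform $\Phi^{(s)}_{u,v}\in\{-1,1\}$ is drawn ($\Phi^{(s)}_{v,u}=-\Phi^{(s)}_{u,v}$); both nodes receive $\lfloor (x^{(s-1)}_u+x^{(s-1)}_v)/2\rfloor$ tokens and the excess token, if the sum is odd, goes to $u$ if $\Phi^{(s)}_{u,v}=1$ and to $v$ otherwise; unmatched nodes keep their load. The rounding error is $e^{(s)}_{u,v}=\frac12\,\mathsf{Odd}(x^{(s-1)}_u+x^{(s-1)}_v)\,\Phi^{(s)}_{u,v}$, where $\mathsf{Odd}(x)=x\bmod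 2$. $[u:v]\in\mathbf{M}^{(s)}$ means $\{u,v\}\in\mathbf{M}^{(s)}$ with $u<v$. The probability is over the orientations. *)

theory Defs
  imports "HOL-Probability.Probability"
begin

text \<open>Nodes are 0..<n. A graph is a set E of 2-element subsets of {0..<n}.
  A matching is represented by its set of ordered pairs (u,v) with u < v,
  i.e. the pairs [u:v].\<close>

definition is_graph :: "nat \<Rightarrow> nat set set \<Rightarrow> bool" where
  "is_graph n E \<longleftrightarrow> (\<forall>e\<in>E. \<exists>u v. e = {u, v} \<and> u \<noteq> v \<and> u < n \<and> v < n)"

definition is_matching :: "nat set set \<Rightarrow> (nat \<times> nat) set \<Rightarrow> bool" where
  "is_matching E M \<longleftrightarrow>
     (\<forall>(u,v)\<in>M. u < v \<and> {u, v} \<in> E) \<and>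
     (\<forall>(u,v)\<in>M. \<forall>(u',v')\<in>M. (u,v) \<noteq> (u',v') \<longrightarrow> {u,v} \<inter> {u',v'} = {})"

definition Odd :: "int \<Rightarrow> int" where
  "Odd x = x mod 2"

text \<open>One round of the discrete protocol with random orientation.
  phi u v (for [u:v] in M) is the orientation in {-1,1}; the excess token goes to
  u if phi u v = 1 and to v otherwise.\<close>
definition balance_step :: "(nat \<Rightarrow> int) \<Rightarrow> (nat \<times> nat) set \<Rightarrow> (nat \<Rightarrow> nat \<Rightarrow> int) \<Rightarrow> nat \<Rightarrow> int" where
  "balance_step x M phi w =
     (if \<exists>v. (w, v) \<in> M then
        (let v = (THE v. (w, v) \<in> M) in
           (x w + x v) div 2 + (if Odd (x w + x v) = 1 \<and> phi w v = 1 then 1 else 0))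
      else if \<exists>u. (u, w) \<in> M then
        (let u = (THE u. (u, w) \<in> M) in
           (x u + x w) div 2 + (if Odd (x u + x w) = 1 \<and> phi u w \<noteq> 1 then 1 else 0))
      else x w)"

text \<open>Load after round t1 + k, starting from x0 = x^(t1) at the end of round t1,
  with orientations Phi (s, u, v) for round s.\<close>
primrec load_after :: "(nat \<Rightarrow> (nat \<times> nat) set) \<Rightarrow> nat \<Rightarrow> (nat \<Rightarrow> int)
    \<Rightarrow> (nat \<times> nat \<times> nat \<Rightarrow> int) \<Rightarrow> nat \<Rightarrow> nat \<Rightarrow> int" where
  "load_after M t1 x0 Phi 0 = x0"
| "load_after M t1 x0 Phi (Suc k) =
     balance_step (load_after M t1 x0 Phi k) (M (t1 + Suc k))
       (\<lambda>u v. Phi (t1 + Suc k, u, v))"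

definition load :: "(nat \<Rightarrow> (nat \<times> nat) set) \<Rightarrow> nat \<Rightarrow> (nat \<Rightarrow> int)
    \<Rightarrow> (nat \<times> nat \<times> nat \<Rightarrow> int) \<Rightarrow> nat \<Rightarrow> nat \<Rightarrow> int" where
  "load M t1 x0 Phi s = load_after M t1 x0 Phi (s - t1)"

definition rerr :: "(nat \<Rightarrow> (nat \<times> nat) set) \<Rightarrow> nat \<Rightarrow> (nat \<Rightarrow> int)
    \<Rightarrow> (nat \<times> nat \<times> nat \<Rightarrow> int) \<Rightarrow> nat \<Rightarrow> nat \<Rightarrow> nat \<Rightarrow> real" where
  "rerr M t1 x0 Phi s u v =
     1/2 * real_of_int (Odd (load M t1 x0 Phi (s - 1) u + load M t1 x0 Phi (s - 1) v))
         * real_of_int (Phi (s, u, v))"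

definition orient_index :: "(nat \<Rightarrow> (nat \<times> nat) set) \<Rightarrow> nat \<Rightarrow> nat \<Rightarrow> (nat \<times> nat \<times> nat) set" where
  "orient_index M t1 t2 = {(s, u, v). t1 + 1 \<le> s \<and> s \<le> t2 \<and> (u, v) \<in> M s}"

text \<open>Sample space: all orientation assignments; uniform distribution on it = independent
  uniform orientations in {-1,1}.\<close>
definition orient_space :: "(nat \<Rightarrow> (nat \<times> nat) set) \<Rightarrow> nat \<Rightarrow> nat \<Rightarrow> (nat \<times> nat \<times> nat \<Rightarrow> int) set" where
  "orient_space M t1 t2 =
     {Phi. (\<forall>i\<in>orient_index M t1 t2. Phi i \<in> {-1, 1}) \<and> (\<forall>i. i \<notin> orient_index M t1 t2 \<longrightarrow> Phi i = 0)}"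

definition orient_pmf :: "(nat \<Rightarrow> (nat \<times> nat) set) \<Rightarrow> nat \<Rightarrow> nat \<Rightarrow> (nat \<times> nat \<times> nat \<Rightarrow> int) pmf" where
  "orient_pmf M t1 t2 = pmf_of_set (orient_space M t1 t2)"

end

(* The rounding error of [u:v] in round s is the orientation sign Phi(s,u,v), independent and
   uniform, times the coefficient Odd(x_u + x_v)/2 of the loads after round s - 1, which only
   depend on the orientations of earlier rounds.  So Z is a martingale transform of independent
   Rademacher signs with predictable coefficients bounded by g.  Its mean vanishes by the symmetry
   of the last sign, and peeling off the signs in order of decreasing round with
   cosh c \<le> exp (c^2/2) bounds the moment generating function by exp (l^2 \<Sum>g^2 / 2); the
   Chernoff bound applied to Z and -Z then gives the two-sided tail estimate (Azuma's inequality). *)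

theory Submission
  imports Defs
begin

lemma exp_plus_exp_minus_le: "exp c + exp (-c) \<le> 2 * exp (c\<^sup>2 / 2)" for c :: real
proof -
  have nonneg: "exp c + exp (-c) \<le> 2 * exp (c\<^sup>2 / 2)" if "c \<ge> 0" for c :: real
  proof -
    \<comment> \<open>Hoeffding's lemma for a fair coin with range 2c\<close>
    have "ln ((1 + exp (2 * c)) / 2) \<le> c + c\<^sup>2 / 2"
      using Hoeffdings_lemma_aux[of "2 * c" "1 / 2"] that
      by (simp add: power2_eq_square field_simps)
    then have "(1 + exp (2 * c)) / 2 \<le> exp (c + c\<^sup>2 / 2)"
      by (metis add_pos_pos exp_gt_zero exp_le_cancel_iff exp_ln half_gt_zero_iff zero_less_one)
    have "exp c + exp (-c) = 2 * exp (-c) * ((1 + exp (2 * c)) / 2)"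
      by (simp add: algebra_simps flip: exp_add)
    also have "\<dots> \<le> 2 * exp (-c) * exp (c + c\<^sup>2 / 2)"
      using \<open>(1 + exp (2 * c)) / 2 \<le> _\<close> by simp
    also have "\<dots> = 2 * exp (c\<^sup>2 / 2)"
      by (simp add: mult.assoc flip: exp_add)
    finally show ?thesis .
  qed
  show ?thesis
  proof (cases "c \<ge> 0")
    case False
    with nonneg[of "-c"] show ?thesis by (simp add: add.commute)
  qed (rule nonneg)
qed

lemma exp_plus_exp_minus_le_of_abs_le:
  fixes c b :: real
  assumes "\<bar>c\<bar> \<le> b"
  shows "exp c + exp (-c) \<le> 2 * exp (b\<^sup>2 / 2)"
proof -
  have "\<bar>c\<bar>\<^sup>2 \<le> b\<^sup>2"
    using assms by (intro power_mono) simp_all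
  then have "exp (c\<^sup>2 / 2) \<le> exp (b\<^sup>2 / 2)"
    by simp
  with exp_plus_exp_minus_le[of c] show ?thesis
    by linarith
qed

lemma (in prob_space) tail_le_if_mgf_le:
  fixes f :: "'a \<Rightarrow> real"
  assumes int: "\<And>l. integrable M (\<lambda>x. exp (l * f x))"
    and mgf: "\<And>l. expectation (\<lambda>x. exp (l * f x)) \<le> exp (l\<^sup>2 * G / 2)"
    and "\<delta> > 0" "G > 0"
  shows "prob {x\<in>space M. \<delta> \<le> f x} \<le> exp (- (\<delta>\<^sup>2 / (2 * G)))"
proof -
  define \<mu> where "\<mu> = \<delta> / G"
  have "\<mu> > 0"
    using assms by (simp add: \<mu>_def)
  then have "{x\<in>space M. \<delta> \<le> f x} = {x\<in>space M. exp (\<mu> * \<delta>) \<le> exp (\<mu> * f x)}"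
    by simp
  also have "prob \<dots> \<le> expectation (\<lambda>x. exp (\<mu> * f x)) / exp (\<mu> * \<delta>)"
    by (rule integral_Markov_inequality_measure[OF int sets.top]) simp_all
  also have "\<dots> \<le> exp (\<mu>\<^sup>2 * G / 2) / exp (\<mu> * \<delta>)"
    by (intro divide_right_mono mgf) simp
  also have "\<dots> = exp (\<mu>\<^sup>2 * G / 2 - \<mu> * \<delta>)"
    by (rule exp_diff[symmetric])
  also have "\<mu>\<^sup>2 * G / 2 - \<mu> * \<delta> = - (\<delta>\<^sup>2 / (2 * G))"
    using \<open>G > 0\<close> by (simp add: \<mu>_def power2_eq_square field_simps)
  finally show ?thesis .
qed

lemma (in prob_space) abs_tail_le_if_mgf_le:
  fixes f :: "'a \<Rightarrow> real"
  assumes f [measurable]: "f \<in> borel_measurable M"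
    and int: "\<And>l. integrable M (\<lambda>x. exp (l * f x))"
    and mgf: "\<And>l. expectation (\<lambda>x. exp (l * f x)) \<le> exp (l\<^sup>2 * G / 2)"
    and "\<delta> > 0" "G \<ge> 0"
  shows "prob {x\<in>space M. \<delta> \<le> \<bar>f x\<bar>} \<le> 2 * exp (- (\<delta>\<^sup>2 / (2 * G)))"
proof (cases "G = 0")
  case True
  have "prob {x\<in>space M. \<delta> \<le> \<bar>f x\<bar>} \<le> 1"
    by (rule prob_le_1)
  moreover have "2 * exp (- (\<delta>\<^sup>2 / (2 * G))) = 2"
    using True by simp
  ultimately show ?thesis
    by linarith
next
  case False
  with \<open>G \<ge> 0\<close> have "G > 0" by simp
  have upper: "prob {x\<in>space M. \<delta> \<le> f x} \<le> exp (- (\<delta>\<^sup>2 / (2 * G)))"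
    using int mgf \<open>\<delta> > 0\<close> \<open>G > 0\<close> by (rule tail_le_if_mgf_le)
  have lower: "prob {x\<in>space M. \<delta> \<le> - f x} \<le> exp (- (\<delta>\<^sup>2 / (2 * G)))"
  proof (rule tail_le_if_mgf_le[OF _ _ \<open>\<delta> > 0\<close> \<open>G > 0\<close>])
    show "integrable M (\<lambda>x. exp (l * - f x))" for l
      using int[of "- l"] by simp
    show "expectation (\<lambda>x. exp (l * - f x)) \<le> exp (l\<^sup>2 * G / 2)" for l
      using mgf[of "- l"] by simp
  qed
  have "{x\<in>space M. \<delta> \<le> \<bar>f x\<bar>} = {x\<in>space M. \<delta> \<le> f x} \<union> {x\<in>space M. \<delta> \<le> - f x}"
    by auto
  also have "prob \<dots> \<le> prob {x\<in>space M. \<delta> \<le> f x} + prob {x\<in>space M. \<delta> \<le> - f x}"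
    by (rule measure_Un_le) measurable
  finally show ?thesis
    using upper lower by linarith
qed

definition sign_vectors :: "'a set \<Rightarrow> ('a \<Rightarrow> int) set" where
  "sign_vectors I = {P. (\<forall>i\<in>I. P i \<in> {-1, 1}) \<and> (\<forall>i. i \<notin> I \<longrightarrow> P i = 0)}"

text \<open>Predictability with respect to the filtration generated by the signs in order of
  increasing rank r; the sums of c j P * P j over I are then Rademacher martingale transforms.\<close>
definition predictable :: "('a \<Rightarrow> nat) \<Rightarrow> 'a set \<Rightarrow> ('a \<Rightarrow> ('a \<Rightarrow> int) \<Rightarrow> real) \<Rightarrow> bool" where
  "predictable r I c \<longleftrightarrow>
     (\<forall>j\<in>I. \<forall>P P'. (\<forall>k. r k < r j \<longrightarrow> P k = P' k) \<longrightarrow> c j P = c j P')"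

lemma sign_vectors_empty [simp]: "sign_vectors {} = {\<lambda>_. 0}"
  by (auto simp: sign_vectors_def)

lemma sign_vectors_nonempty: "sign_vectors I \<noteq> {}"
proof -
  have "(\<lambda>i. if i \<in> I then 1 else 0) \<in> sign_vectors I"
    by (auto simp: sign_vectors_def)
  then show ?thesis by blast
qed

lemma sign_vectors_insert:
  assumes "i \<notin> I"
  shows "sign_vectors (insert i I) = (\<lambda>(P, \<sigma>). P(i := \<sigma>)) ` (sign_vectors I \<times> {-1, 1})"
proof (intro equalityI subsetI)
  fix Q assume Q: "Q \<in> sign_vectors (insert i I)"
  then have "(Q(i := 0), Q i) \<in> sign_vectors I \<times> {-1, 1}"
    using assms by (auto simp: sign_vectors_def)
  then show "Q \<in> (\<lambda>(P, \<sigma>). P(i := \<sigma>)) ` (sign_vectors I \<times> {-1, 1})"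
    by (rule rev_image_eqI) simp
next
  fix Q assume "Q \<in> (\<lambda>(P, \<sigma>). P(i := \<sigma>)) ` (sign_vectors I \<times> {-1, 1})"
  then obtain P \<sigma> where "P \<in> sign_vectors I" "\<sigma> \<in> {-1, 1}" "Q = P(i := \<sigma>)"
    by auto
  then show "Q \<in> sign_vectors (insert i I)"
    by (auto simp: sign_vectors_def)
qed

lemma inj_on_fun_upd_sign_vectors:
  assumes "i \<notin> I"
  shows "inj_on (\<lambda>(P, \<sigma>). P(i := \<sigma>)) (sign_vectors I \<times> {-1, 1})"
proof (rule inj_onI, clarify)
  fix P \<sigma> P' \<sigma>'
  assume "P \<in> sign_vectors I" "P' \<in> sign_vectors I" and eq: "P(i := \<sigma>) = P'(i := \<sigma>')"
  with assms have "P i = P' i"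
    by (simp add: sign_vectors_def)
  then have "P x = P' x" for x
    using fun_cong[OF eq, of x] by (cases "x = i") simp_all
  then have "P = P'" ..
  moreover have "\<sigma> = \<sigma>'"
    using fun_cong[OF eq, of i] by simp
  ultimately show "P = P' \<and> \<sigma> = \<sigma>'"
    by simp
qed

lemma sum_sign_vectors_insert:
  assumes "i \<notin> I"
  shows "(\<Sum>P\<in>sign_vectors (insert i I). F P)
           = (\<Sum>P\<in>sign_vectors I. F (P(i := 1)) + F (P(i := -1)))"
proof -
  have "(\<Sum>P\<in>sign_vectors (insert i I). F P) = (\<Sum>(P, \<sigma>)\<in>sign_vectors I \<times> {-1, 1}. F (P(i := \<sigma>)))"
    unfolding sign_vectors_insert[OF assms]
    by (subst sum.reindex[OF inj_on_fun_upd_sign_vectors[OF assms]]) (simp add: case_prod_unfold)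
  also have "\<dots> = (\<Sum>P\<in>sign_vectors I. \<Sum>\<sigma>\<in>{-1, 1::int}. F (P(i := \<sigma>)))"
    by (rule sum.cartesian_product[symmetric])
  also have "\<dots> = (\<Sum>P\<in>sign_vectors I. F (P(i := 1)) + F (P(i := -1)))"
    by (simp add: add.commute)
  finally show ?thesis .
qed

lemma finite_sign_vectors:
  assumes "finite I"
  shows "finite (sign_vectors I)" and "card (sign_vectors I) = 2 ^ card I"
  using assms
proof (induction I rule: finite_induct)
  case (insert i I)
  { case 1 show ?case
      using insert by (simp add: sign_vectors_insert) }
  { case 2 show ?case
      using insert by (simp add: sign_vectors_insert card_image inj_on_fun_upd_sign_vectors) }
qed simp_all

lemma predictable_cong_fun_upd:
  assumes "predictable r I c" "j \<in> I" "r j \<le> r i"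
  shows "c j (P(i := \<sigma>)) = c j P"
  using assms unfolding predictable_def by auto

lemma sum_sign_vectors_exp_le:
  fixes c :: "'a \<Rightarrow> ('a \<Rightarrow> int) \<Rightarrow> real" and r :: "'a \<Rightarrow> nat"
  assumes "finite I" and "predictable r I c" and "\<And>j P. j \<in> I \<Longrightarrow> \<bar>c j P\<bar> \<le> b j"
  shows "(\<Sum>P\<in>sign_vectors I. exp (\<Sum>j\<in>I. c j P * P j))
           \<le> 2 ^ card I * exp (\<Sum>j\<in>I. (b j)\<^sup>2 / 2)"
  using assms
proof (induction I rule: finite_ranking_induct[where f = r])
  case (insert i I)
  show ?case
  proof (cases "i \<in> I")
    case True
    with insert show ?thesis
      by (simp add: insert_absorb predictable_def)
  next
    case False
    have pred: "predictable r I c"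
      using insert.prems(1) by (simp add: predictable_def)
    have last_coord:
      "exp (\<Sum>j\<in>insert i I. c j (P(i := \<sigma>)) * (P(i := \<sigma>)) j)
         = exp (c i P * \<sigma>) * exp (\<Sum>j\<in>I. c j P * P j)" for P \<sigma>
    proof -
      have "(\<Sum>j\<in>I. c j (P(i := \<sigma>)) * (P(i := \<sigma>)) j) = (\<Sum>j\<in>I. c j P * P j)"
        using False
        by (intro sum.cong) (auto simp: predictable_cong_fun_upd[OF insert.prems(1)] insert.hyps(2))
      moreover have "c i (P(i := \<sigma>)) = c i P"
        by (rule predictable_cong_fun_upd[OF insert.prems(1)]) simp_all
      ultimately show ?thesis
        using insert.hyps(1) False by (simp add: exp_add)
    qed
    have "(\<Sum>P\<in>sign_vectors (insert i I). exp (\<Sum>j\<in>insert i I. c j P * P j))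
        = (\<Sum>P\<in>sign_vectors I. exp (\<Sum>j\<in>insert i I. c j (P(i := 1)) * (P(i := 1)) j)
             + exp (\<Sum>j\<in>insert i I. c j (P(i := -1)) * (P(i := -1)) j))"
      by (rule sum_sign_vectors_insert[OF False])
    also have "\<dots> = (\<Sum>P\<in>sign_vectors I. (exp (c i P) + exp (- c i P)) * exp (\<Sum>j\<in>I. c j P * P j))"
      unfolding last_coord by (simp add: distrib_right)
    also have "\<dots> \<le> (\<Sum>P\<in>sign_vectors I. 2 * exp ((b i)\<^sup>2 / 2) * exp (\<Sum>j\<in>I. c j P * P j))"
      using insert.prems(2) by (intro sum_mono mult_right_mono exp_plus_exp_minus_le_of_abs_le) simp_all
    also have "\<dots> = 2 * exp ((b i)\<^sup>2 / 2) * (\<Sum>P\<in>sign_vectors I. exp (\<Sum>j\<in>I. c j P * P j))"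
      by (simp add: sum_distrib_left)
    also have "\<dots> \<le> 2 * exp ((b i)\<^sup>2 / 2) * (2 ^ card I * exp (\<Sum>j\<in>I. (b j)\<^sup>2 / 2))"
      using insert.prems by (intro mult_left_mono insert.IH pred) auto
    also have "\<dots> = 2 ^ card (insert i I) * exp (\<Sum>j\<in>insert i I. (b j)\<^sup>2 / 2)"
      using insert.hyps(1) False by (simp add: exp_add)
    finally show ?thesis .
  qed
qed simp

text \<open>Flipping the sign of coordinate j permutes the sign vectors, negates the j-th term
  and, by predictability, leaves its coefficient unchanged.\<close>
lemma sum_sign_vectors_eq_0:
  fixes c :: "'a \<Rightarrow> ('a \<Rightarrow> int) \<Rightarrow> real"
  assumes "predictable r I c"
  shows "(\<Sum>P\<in>sign_vectors I. \<Sum>j\<in>I. c j P * P j) = 0"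
proof -
  have "(\<Sum>P\<in>sign_vectors I. c j P * P j) = 0" if j: "j \<in> I" for j
  proof -
    define flip where "flip = (\<lambda>P :: 'a \<Rightarrow> int. P(j := - P j))"
    have "(\<Sum>P\<in>sign_vectors I. c j P * P j) = (\<Sum>P\<in>sign_vectors I. c j (flip P) * flip P j)"
      by (rule sum.reindex_bij_witness[where i = flip and j = flip])
         (auto simp: flip_def sign_vectors_def)
    also have "\<dots> = - (\<Sum>P\<in>sign_vectors I. c j P * P j)"
      using predictable_cong_fun_upd[OF assms j] by (simp add: flip_def sum_negf)
    finally show ?thesis by simp
  qed
  then show ?thesis
    by (subst sum.swap) simp
qed

lemma predictable_sign_sum_concentration:
  fixes c :: "'a \<Rightarrow> ('a \<Rightarrow> int) \<Rightarrow> real"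
  assumes fin: "finite I" and pred: "predictable r I c"
    and bnd: "\<And>j P. j \<in> I \<Longrightarrow> \<bar>c j P\<bar> \<le> b j"
  defines "p \<equiv> pmf_of_set (sign_vectors I)" and "X \<equiv> \<lambda>P. \<Sum>j\<in>I. c j P * P j"
  shows "measure_pmf.expectation p X = 0"
    and "\<delta> > 0 \<Longrightarrow>
      measure_pmf.prob p {P. \<delta> \<le> \<bar>X P\<bar>} \<le> 2 * exp (- (\<delta>\<^sup>2 / (2 * (\<Sum>j\<in>I. (b j)\<^sup>2))))"
proof -
  note uniform = integral_pmf_of_set[OF sign_vectors_nonempty finite_sign_vectors(1)[OF fin]]
  show "measure_pmf.expectation p X = 0"
    using sum_sign_vectors_eq_0[OF pred] by (simp add: p_def X_def uniform)
  assume "\<delta> > 0"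
  have mgf: "measure_pmf.expectation p (\<lambda>P. exp (l * X P)) \<le> exp (l\<^sup>2 * (\<Sum>j\<in>I. (b j)\<^sup>2) / 2)"
    for l
  proof -
    have "(\<Sum>P\<in>sign_vectors I. exp (\<Sum>j\<in>I. (l * c j P) * P j))
          \<le> 2 ^ card I * exp (\<Sum>j\<in>I. (\<bar>l\<bar> * b j)\<^sup>2 / 2)"
      using fin pred bnd
      by (intro sum_sign_vectors_exp_le[where r = r]) (auto simp: predictable_def abs_mult mult_left_mono)
    also have "(\<Sum>j\<in>I. (\<bar>l\<bar> * b j)\<^sup>2 / 2) = l\<^sup>2 * (\<Sum>j\<in>I. (b j)\<^sup>2) / 2"
      by (simp add: power_mult_distrib sum_distrib_left sum_divide_distrib)
    finally have "(\<Sum>P\<in>sign_vectors I. exp (l * X P)) \<le> 2 ^ card I * exp (l\<^sup>2 * (\<Sum>j\<in>I. (b j)\<^sup>2) / 2)"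
      by (simp add: X_def sum_distrib_left mult.assoc)
    then show ?thesis
      by (simp add: p_def uniform finite_sign_vectors[OF fin] pos_divide_le_eq mult.commute)
  qed
  have "measure_pmf.prob p {x\<in>space (measure_pmf p). \<delta> \<le> \<bar>X x\<bar>}
        \<le> 2 * exp (- (\<delta>\<^sup>2 / (2 * (\<Sum>j\<in>I. (b j)\<^sup>2))))"
  proof (rule measure_pmf.abs_tail_le_if_mgf_le[OF _ _ mgf \<open>\<delta> > 0\<close>])
    show "integrable (measure_pmf p) (\<lambda>x. exp (l * X x))" for l
      by (simp add: p_def integrable_measure_pmf_finite fin finite_sign_vectors sign_vectors_nonempty)
  qed (auto intro: sum_nonneg)
  then show "measure_pmf.prob p {P. \<delta> \<le> \<bar>X P\<bar>} \<le> 2 * exp (- (\<delta>\<^sup>2 / (2 * (\<Sum>j\<in>I. (b j)\<^sup>2))))"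
    by simp
qed

lemma load_after_cong:
  assumes "\<And>s u v. s \<le> t1 + k \<Longrightarrow> Phi (s, u, v) = Phi' (s, u, v)"
  shows "load_after M t1 x0 Phi k = load_after M t1 x0 Phi' k"
  using assms
proof (induction k)
  case (Suc k)
  then have "load_after M t1 x0 Phi k = load_after M t1 x0 Phi' k"
    and "(\<lambda>u v. Phi (t1 + Suc k, u, v)) = (\<lambda>u v. Phi' (t1 + Suc k, u, v))"
    by auto
  then show ?case by simp
qed simp

lemma finite_matching:
  assumes "is_graph n E" and "is_matching E M"
  shows "finite M"
proof (rule finite_subset)
  show "M \<subseteq> {..<n} \<times> {..<n}"
  proof (rule subrelI)
    fix u v assume "(u, v) \<in> M"
    with assms(2) have "{u, v} \<in> E"
      by (auto simp: is_matching_def)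
    with assms(1) obtain a b where "{u, v} = {a, b}" "a < n" "b < n"
      unfolding is_graph_def by blast
    then show "(u, v) \<in> {..<n} \<times> {..<n}"
      by (metis doubleton_eq_iff lessThan_iff mem_Sigma_iff)
  qed
qed simp

lemma orient_index_eq_Sigma: "orient_index M t1 t2 = Sigma {t1 + 1..t2} M"
  by (auto simp: orient_index_def)

lemma sum_orient_index:
  assumes "\<And>s. finite (M s)"
  shows "(\<Sum>s\<in>{t1 + 1..t2}. \<Sum>(u, v)\<in>M s. f s u v) = (\<Sum>(s, u, v)\<in>orient_index M t1 t2. f s u v)"
  using assms by (simp add: orient_index_eq_Sigma sum.Sigma split_def)

lemma orient_pmf_eq: "orient_pmf M t1 t2 = pmf_of_set (sign_vectors (orient_index M t1 t2))"
  by (simp add: orient_pmf_def orient_space_def sign_vectors_def)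

definition rounding_coeff ::
    "(nat \<Rightarrow> (nat \<times> nat) set) \<Rightarrow> nat \<Rightarrow> (nat \<Rightarrow> int) \<Rightarrow> (nat \<Rightarrow> nat \<Rightarrow> nat \<Rightarrow> real)
      \<Rightarrow> nat \<times> nat \<times> nat \<Rightarrow> (nat \<times> nat \<times> nat \<Rightarrow> int) \<Rightarrow> real" where
  "rounding_coeff M t1 x0 g = (\<lambda>(s, u, v) Phi.
     g s u v / 2 * real_of_int (Odd (load M t1 x0 Phi (s - 1) u + load M t1 x0 Phi (s - 1) v)))"

lemma rerr_eq_rounding_coeff:
  "g s u v * rerr M t1 x0 Phi s u v = rounding_coeff M t1 x0 g (s, u, v) Phi * Phi (s, u, v)"
  by (simp add: rerr_def rounding_coeff_def)

lemma predictable_rounding_coeff: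
  "predictable fst (orient_index M t1 t2) (rounding_coeff M t1 x0 g)"
  unfolding predictable_def
proof clarify
  fix s u v and Phi Phi' :: "nat \<times> nat \<times> nat \<Rightarrow> int"
  assume "(s, u, v) \<in> orient_index M t1 t2" and earlier: "\<forall>k. fst k < fst (s, u, v) \<longrightarrow> Phi k = Phi' k"
  then have "t1 + 1 \<le> s"
    by (simp add: orient_index_def)
  with earlier have "load M t1 x0 Phi (s - 1) = load M t1 x0 Phi' (s - 1)"
    unfolding load_def by (intro load_after_cong) auto
  then show "rounding_coeff M t1 x0 g (s, u, v) Phi = rounding_coeff M t1 x0 g (s, u, v) Phi'"
    by (simp add: rounding_coeff_def)
qed

lemma abs_rounding_coeff_le:
  assumes "g s u v \<ge> 0"
  shows "\<bar>rounding_coeff M t1 x0 g (s, u, v) Phi\<bar> \<le> g s u v"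
proof -
  have "\<bar>real_of_int (Odd x)\<bar> \<le> 2" for x
    by (simp add: Odd_def)
  then show ?thesis
    using assms by (simp add: rounding_coeff_def abs_mult mult_left_mono)
qed

theorem lemma2p12:
  fixes n :: nat and E :: "nat set set" and M :: "nat \<Rightarrow> (nat \<times> nat) set"
    and t1 t2 :: nat and x0 :: "nat \<Rightarrow> int" and g :: "nat \<Rightarrow> nat \<Rightarrow> nat \<Rightarrow> real"
  assumes "is_graph n E"
    and "\<And>s. is_matching E (M s)"
    and "t1 < t2"
    and "\<And>s u v. t1 + 1 \<le> s \<Longrightarrow> s \<le> t2 \<Longrightarrow> (u, v) \<in> M s \<Longrightarrow> g s u v \<ge> 0"
  defines "Z \<equiv> (\<lambda>Phi. \<Sum>s\<in>{t1+1..t2}. \<Sum>(u,v)\<in>M s. g s u v * rerr M t1 x0 Phi s u v)"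
  shows "measure_pmf.expectation (orient_pmf M t1 t2) Z = 0 \<and>
    (\<forall>\<delta>>0. measure_pmf.prob (orient_pmf M t1 t2)
        {Phi. \<bar>Z Phi - measure_pmf.expectation (orient_pmf M t1 t2) Z\<bar> \<ge> \<delta>}
      \<le> 2 * exp (- (\<delta>^2 / (2 * (\<Sum>s\<in>{t1+1..t2}. \<Sum>(u,v)\<in>M s. (g s u v)^2)))))"
proof -
  define I where "I = orient_index M t1 t2"
  have finite_M: "finite (M s)" for s
    using assms(1,2) by (rule finite_matching)
  then have "finite I"
    by (simp add: I_def orient_index_eq_Sigma)
  have "Z Phi = (\<Sum>(s, u, v)\<in>I. g s u v * rerr M t1 x0 Phi s u v)" for Phi
    unfolding Z_def I_def by (rule sum_orient_index[OF finite_M])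
  then have Z_eq: "Z = (\<lambda>Phi. \<Sum>j\<in>I. rounding_coeff M t1 x0 g j Phi * Phi j)"
    by (auto simp: rerr_eq_rounding_coeff intro!: sum.cong)
  have "\<bar>rounding_coeff M t1 x0 g j Phi\<bar> \<le> (case j of (s, u, v) \<Rightarrow> g s u v)" if "j \<in> I" for j Phi
    using that assms(4) by (auto simp: I_def orient_index_def intro: abs_rounding_coeff_le)
  note concentration = predictable_sign_sum_concentration[OF \<open>finite I\<close>
      predictable_rounding_coeff[of M t1 t2 x0 g, folded I_def] this]
  have G_eq: "(\<Sum>s\<in>{t1+1..t2}. \<Sum>(u,v)\<in>M s. (g s u v)^2) = (\<Sum>j\<in>I. (case j of (s, u, v) \<Rightarrow> g s u v)\<^sup>2)"
    unfolding sum_orient_index[OF finite_M] I_def by (intro sum.cong) auto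
  have E0: "measure_pmf.expectation (orient_pmf M t1 t2) Z = 0"
    unfolding Z_eq orient_pmf_eq I_def[symmetric] by (rule concentration(1))
  show ?thesis
    unfolding E0 diff_zero
    unfolding Z_eq G_eq orient_pmf_eq I_def[symmetric]
    using concentration(2) by blast
qed

end
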